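(* Assume $A_n$ satisfies (C1) and (C2), and let $\mathbf X\sim\mathbb P_{n,\beta_0,B_0}$ with $(\beta_0,B_0)\in\Theta$. If $T_n(\mathbf X)=\Theta_p(1)$, then with probability tending to one the pseudo-likelihood estimator $(\hat\beta_n,\hat B_n)$ exists and $\|(\hat\beta_n-\beta_0,\hat B_n-B_0)\|=O_p(n^{-1/2})$ under $\mathbb P_{n,\beta_0,B_0}$.
   Context: For each $n$, $A_n$ is a known symmetric $n\times n$ matrix with non-negative entries and zero diagonal. The Ising model is $\mathbb P_{n,\beta,B}(\mathbf X=\mathbf x)=Z_n(\beta,B)^{-1}\exp(\frac{\beta}{2}\mathbf x^\top A_n\mathbf x+B\sum_i x_i)$ on $\{-1,1\}^n$. (C1): there is a constant $\gamma<\infty$ with $\max_{i}\sum_{j}A_n(i,j)\le\gamma$ for all $n$; (C2): $\liminf_n\frac1n\sum_{i,j}A_n(i,j)>0$. $\Theta=\{(\beta,B):\beta>0,B\ne0\}$. $m_i(\mathbf x)=\sum_jA_n(i,j)x_j$, $\bar m(\mathbf x)=\frac1n\sum_i m_i(\mathbf x)$, $T_n(\mathbf x)=\frac1n\sum_i(m_i(\mathbf x)-\bar m(\mathbf x))^2$. $Q_n(\beta,B\mid\mathbf x)=\sum_i m_i(\mathbf x)(x_i-\tanh(\beta m_i(\mathbf x)+B))$, $R_n(\beta,B\mid\mathbf x)=\sum_i(x_i-\tanh(\beta m_i(\mathbf x)+B))$; the pseudo-likelihood estimator $(\hat\beta_n,\hat B_n)$ is the unique root of $(Q_n,R_n)=(0,0)$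 when it exists. $U_n=O_p(V_n)$ means $U_n/V_n$ is tight; $U_n=\Theta_p(V_n)$ means $U_n=O_p(V_n)$ and $V_n=O_p(U_n)$. *)

theory Defs
  imports "HOL-Analysis.Analysis" "HOL-Library.Liminf_Limsup"
begin

text \<open>Matrices: A n i j for i, j < n (entries outside the range are ignored).
Configurations on {-1,1}^n are represented as functions nat => real with values
in {-1,1} on indices < n and 0 elsewhere.\<close>

type_synonym mat_seq = "nat \<Rightarrow> nat \<Rightarrow> nat \<Rightarrow> real"

definition cfgs :: "nat \<Rightarrow> (nat \<Rightarrow> real) set" where
  "cfgs n = {x. (\<forall>i<n. x i = -1 \<or> x i = 1) \<and> (\<forall>i\<ge>n. x i = 0)}"

definition ising_weight :: "mat_seq \<Rightarrow> nat \<Rightarrow> real \<Rightarrow> real \<Rightarrow> (nat \<Rightarrow> real) \<Rightarrow> real" where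
  "ising_weight A n \<beta> B x =
     exp (\<beta> / 2 * (\<Sum>i<n. \<Sum>j<n. x i * A n i j * x j) + B * (\<Sum>i<n. x i))"

definition ising_Z :: "mat_seq \<Rightarrow> nat \<Rightarrow> real \<Rightarrow> real \<Rightarrow> real" where
  "ising_Z A n \<beta> B = (\<Sum>x\<in>cfgs n. ising_weight A n \<beta> B x)"

definition ising_prob :: "mat_seq \<Rightarrow> nat \<Rightarrow> real \<Rightarrow> real \<Rightarrow> ((nat \<Rightarrow> real) \<Rightarrow> bool) \<Rightarrow> real" where
  "ising_prob A n \<beta> B E =
     (\<Sum>x\<in>{x\<in>cfgs n. E x}. ising_weight A n \<beta> B x) / ising_Z A n \<beta> B"

definition m_loc :: "mat_seq \<Rightarrow> nat \<Rightarrow> (nat \<Rightarrow> real) \<Rightarrow> nat \<Rightarrow> real" where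
  "m_loc A n x i = (\<Sum>j<n. A n i j * x j)"

definition m_bar :: "mat_seq \<Rightarrow> nat \<Rightarrow> (nat \<Rightarrow> real) \<Rightarrow> real" where
  "m_bar A n x = (\<Sum>i<n. m_loc A n x i) / real n"

definition T_stat :: "mat_seq \<Rightarrow> nat \<Rightarrow> (nat \<Rightarrow> real) \<Rightarrow> real" where
  "T_stat A n x = (\<Sum>i<n. (m_loc A n x i - m_bar A n x)\<^sup>2) / real n"

definition Q_pl :: "mat_seq \<Rightarrow> nat \<Rightarrow> real \<Rightarrow> real \<Rightarrow> (nat \<Rightarrow> real) \<Rightarrow> real" where
  "Q_pl A n \<beta> B x = (\<Sum>i<n. m_loc A n x i * (x i - tanh (\<beta> * m_loc A n x i + B)))"

definition R_pl :: "mat_seq \<Rightarrow> nat \<Rightarrow> real \<Rightarrow> real \<Rightarrow> (nat \<Rightarrow> real) \<Rightarrow> real" where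
  "R_pl A n \<beta> B x = (\<Sum>i<n. x i - tanh (\<beta> * m_loc A n x i + B))"

definition mple_exists :: "mat_seq \<Rightarrow> nat \<Rightarrow> (nat \<Rightarrow> real) \<Rightarrow> bool" where
  "mple_exists A n x = (\<exists>!p. Q_pl A n (fst p) (snd p) x = 0 \<and> R_pl A n (fst p) (snd p) x = 0)"

definition mple :: "mat_seq \<Rightarrow> nat \<Rightarrow> (nat \<Rightarrow> real) \<Rightarrow> real \<times> real" where
  "mple A n x = (THE p. Q_pl A n (fst p) (snd p) x = 0 \<and> R_pl A n (fst p) (snd p) x = 0)"

definition admissible :: "mat_seq \<Rightarrow> bool" where
  "admissible A \<longleftrightarrow> (\<forall>n i j. i < n \<and> j < n \<longrightarrow>
      A n i j = A n j i \<and> A n i j \<ge> 0 \<and> A n i i = 0)"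

definition cond_C1 :: "mat_seq \<Rightarrow> bool" where
  "cond_C1 A \<longleftrightarrow> (\<exists>\<gamma>. \<forall>n i. i < n \<longrightarrow> (\<Sum>j<n. A n i j) \<le> \<gamma>)"

definition cond_C2 :: "mat_seq \<Rightarrow> bool" where
  "cond_C2 A \<longleftrightarrow> liminf (\<lambda>n. ereal ((\<Sum>i<n. \<Sum>j<n. A n i j) / real n)) > 0"

text \<open>Stochastic order notions for a sequence of statistics U_n of X ~ P_n,
where P n E is the probability of event E at sample size n.\<close>
definition bigO_p :: "(nat \<Rightarrow> ((nat \<Rightarrow> real) \<Rightarrow> bool) \<Rightarrow> real) \<Rightarrow>
    (nat \<Rightarrow> (nat \<Rightarrow> real) \<Rightarrow> real) \<Rightarrow> bool" where
  "bigO_p P U \<longleftrightarrow> (\<forall>\<epsilon>>0. \<exists>M. \<forall>\<^sub>F n in sequentially. P n (\<lambda>x. \<bar>U n x\<bar> > M) \<le> \<epsilon>)"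

text \<open>T_n = Theta_p(1): T_n tight and 1/T_n tight (1/0 read as +infinity).\<close>
definition Theta_p_one :: "(nat \<Rightarrow> ((nat \<Rightarrow> real) \<Rightarrow> bool) \<Rightarrow> real) \<Rightarrow>
    (nat \<Rightarrow> (nat \<Rightarrow> real) \<Rightarrow> real) \<Rightarrow> bool" where
  "Theta_p_one P U \<longleftrightarrow> bigO_p P U \<and>
     (\<forall>\<epsilon>>0. \<exists>\<delta>>0. \<forall>\<^sub>F n in sequentially. P n (\<lambda>x. \<bar>U n x\<bar> < \<delta>) \<le> \<epsilon>)"

end

theory Submission
  imports Defs
begin

text \<open>At the true parameter the pseudo-likelihood scores \<open>Q_n\<close> and \<open>R_n\<close> are sums of terms
  \<open>c_i (x_i - tanh (\<beta> m_i + B))\<close>, and \<open>x_i - tanh (\<beta> m_i + B)\<close> has conditional mean zero given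
  the other spins. Removing spin \<open>i\<close> changes the \<open>j\<close>-th term by \<open>O(A_n(j,i))\<close>, so under (C1) the
  second moments of \<open>Q_n\<close> and \<open>R_n\<close> are \<open>O(n)\<close> and by Chebyshev both are \<open>O_p(\<surd>n)\<close>.

  The negative log pseudo-likelihood is convex with second derivative in direction \<open>d\<close> equal to
  \<open>\<Sum>\<^sub>i (d\<^sub>1 m_i + d\<^sub>2)\<^sup>2 sech\<^sup>2(\<beta> m_i + B)\<close>; on a unit box around \<open>(\<beta>\<^sub>0, B\<^sub>0)\<close> the sech factors
  are bounded below and, when \<open>T_n \<ge> \<delta>\<close>, the sum of squares is at least \<open>c n |d|\<^sup>2\<close>. Strict convexity
  makes the root of the score unique, and strong convexity forces the minimiser over the ball of
  radius \<open>M/\<surd>n\<close> to be interior as soon as the score at \<open>(\<beta>\<^sub>0, B\<^sub>0)\<close> is \<open>O(\<surd>n)\<close>.\<close>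

section \<open>Expectations under the Ising measure\<close>

lemma finite_cfgs: "finite (cfgs n)"
  by (rule finite_subset[OF _ finite_set_of_finite_funs[of "{..<n}" "{-1,1::real}" 0]])
     (auto simp: cfgs_def)

lemma cfgs_nonempty: "(\<lambda>i. if i < n then 1 else 0) \<in> cfgs n"
  unfolding cfgs_def by auto

lemma abs_le_1_if_cfgs: "x \<in> cfgs n \<Longrightarrow> \<bar>x i\<bar> \<le> 1"
  unfolding cfgs_def by (cases "i < n") auto

lemma ising_weight_pos: "ising_weight A n \<beta> B x > 0"
  unfolding ising_weight_def by simp

lemma ising_Z_pos: "ising_Z A n \<beta> B > 0"
  unfolding ising_Z_def
  by (rule sum_pos2[OF finite_cfgs cfgs_nonempty]) (auto simp: ising_weight_pos less_imp_le)

definition ising_expect :: "mat_seq \<Rightarrow> nat \<Rightarrow> real \<Rightarrow> real \<Rightarrow> ((nat \<Rightarrow> real) \<Rightarrow> real) \<Rightarrow> real" where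
  "ising_expect A n \<beta> B f = (\<Sum>x\<in>cfgs n. ising_weight A n \<beta> B x * f x) / ising_Z A n \<beta> B"

lemma ising_prob_eq_expect: "ising_prob A n \<beta> B E = ising_expect A n \<beta> B (\<lambda>x. if E x then 1 else 0)"
  unfolding ising_prob_def ising_expect_def
  by (simp add: sum.inter_filter[OF finite_cfgs] if_distrib cong: if_cong)

lemma ising_expect_mono:
  "(\<And>x. x \<in> cfgs n \<Longrightarrow> f x \<le> g x) \<Longrightarrow> ising_expect A n \<beta> B f \<le> ising_expect A n \<beta> B g"
  unfolding ising_expect_def using ising_Z_pos[of A n \<beta> B]
  by (intro divide_right_mono sum_mono mult_left_mono) (auto simp: ising_weight_pos less_imp_le)

lemma ising_expect_const [simp]: "ising_expect A n \<beta> B (\<lambda>_. c) = c"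
  unfolding ising_expect_def using ising_Z_pos[of A n \<beta> B]
  by (simp add: sum_distrib_right[symmetric] ising_Z_def)

lemma ising_expect_add:
  "ising_expect A n \<beta> B (\<lambda>x. f x + g x) = ising_expect A n \<beta> B f + ising_expect A n \<beta> B g"
  unfolding ising_expect_def by (simp add: distrib_left sum.distrib add_divide_distrib)

lemma ising_expect_sum:
  "ising_expect A n \<beta> B (\<lambda>x. \<Sum>i\<in>I. f i x) = (\<Sum>i\<in>I. ising_expect A n \<beta> B (f i))"
  unfolding ising_expect_def sum_divide_distrib[symmetric] sum_distrib_left
  by (subst sum.swap) simp

lemma ising_expect_abs_le: "\<bar>ising_expect A n \<beta> B f\<bar> \<le> ising_expect A n \<beta> B (\<lambda>x. \<bar>f x\<bar>)"
proof -
  have "\<bar>\<Sum>x\<in>cfgs n. ising_weight A n \<beta> B x * f x\<bar>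
      \<le> (\<Sum>x\<in>cfgs n. ising_weight A n \<beta> B x * \<bar>f x\<bar>)"
    using sum_abs[of "\<lambda>x. ising_weight A n \<beta> B x * f x" "cfgs n"]
    by (simp add: abs_mult ising_weight_pos less_imp_le)
  then show ?thesis
    unfolding ising_expect_def using ising_Z_pos[of A n \<beta> B] by (simp add: divide_right_mono)
qed

lemma ising_prob_mono:
  "(\<And>x. x \<in> cfgs n \<Longrightarrow> E x \<Longrightarrow> F x) \<Longrightarrow> ising_prob A n \<beta> B E \<le> ising_prob A n \<beta> B F"
  unfolding ising_prob_eq_expect by (rule ising_expect_mono) auto

lemma ising_prob_le_1: "ising_prob A n \<beta> B E \<le> 1"
  using ising_expect_mono[of n "\<lambda>x. if E x then 1 else 0" "\<lambda>_. 1" A \<beta> B]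
  unfolding ising_prob_eq_expect by simp

lemma ising_prob_ge_1_minus_union:
  assumes "\<And>x. x \<in> cfgs n \<Longrightarrow> \<not> E1 x \<Longrightarrow> \<not> E2 x \<Longrightarrow> \<not> E3 x \<Longrightarrow> F x"
  shows "ising_prob A n \<beta> B F \<ge>
    1 - (ising_prob A n \<beta> B E1 + ising_prob A n \<beta> B E2 + ising_prob A n \<beta> B E3)"
proof -
  let ?ind = "\<lambda>E x. if E x then 1 else (0::real)"
  have "ising_expect A n \<beta> B (\<lambda>x. 1) \<le>
      ising_expect A n \<beta> B (\<lambda>x. ?ind F x + ?ind E1 x + ?ind E2 x + ?ind E3 x)"
    by (rule ising_expect_mono) (use assms in auto)
  then show ?thesis
    unfolding ising_prob_eq_expect ising_expect_add by simp
qed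

lemma ising_prob_abs_gt_le:
  assumes "t > 0"
  shows "ising_prob A n \<beta> B (\<lambda>x. \<bar>f x\<bar> > t) \<le> ising_expect A n \<beta> B (\<lambda>x. (f x)\<^sup>2) / t\<^sup>2"
proof -
  have "ising_prob A n \<beta> B (\<lambda>x. \<bar>f x\<bar> > t) \<le> ising_expect A n \<beta> B (\<lambda>x. (f x)\<^sup>2 / t\<^sup>2)"
    unfolding ising_prob_eq_expect
  proof (rule ising_expect_mono)
    fix x
    have "t\<^sup>2 \<le> (f x)\<^sup>2" if "\<bar>f x\<bar> > t"
      using that assms by (metis abs_le_square_iff abs_of_pos less_imp_le)
    then show "(if \<bar>f x\<bar> > t then 1 else 0) \<le> (f x)\<^sup>2 / t\<^sup>2"
      using assms by auto
  qed
  also have "\<dots> = ising_expect A n \<beta> B (\<lambda>x. (f x)\<^sup>2) / t\<^sup>2"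
    unfolding ising_expect_def by (simp add: sum_divide_distrib[symmetric])
  finally show ?thesis .
qed

section \<open>Second moment of the score at the true parameter\<close>

definition spin_flip :: "nat \<Rightarrow> (nat \<Rightarrow> real) \<Rightarrow> (nat \<Rightarrow> real)" where
  "spin_flip i x = x(i := - x i)"

lemma spin_flip_spin_flip [simp]: "spin_flip i (spin_flip i x) = x"
  unfolding spin_flip_def by auto

lemma spin_flip_in_cfgs: "i < n \<Longrightarrow> x \<in> cfgs n \<Longrightarrow> spin_flip i x \<in> cfgs n"
  unfolding spin_flip_def cfgs_def by auto

lemma sum_cfgs_spin_flip:
  "i < n \<Longrightarrow> (\<Sum>x\<in>cfgs n. f (spin_flip i x)) = (\<Sum>x\<in>cfgs n. f x)"
  by (rule sum.reindex_bij_witness[where i="spin_flip i" and j="spin_flip i"])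
     (auto simp: spin_flip_in_cfgs)

lemma m_loc_spin_flip:
  assumes "admissible A" "i < n"
  shows "m_loc A n (spin_flip i x) i = m_loc A n x i"
  unfolding m_loc_def spin_flip_def
  by (rule sum.cong) (use assms in \<open>auto simp: admissible_def\<close>)

lemma quadratic_form_spin_flip:
  assumes "admissible A" "i < n"
  shows "(\<Sum>k<n. \<Sum>l<n. spin_flip i x k * A n k l * spin_flip i x l)
       = (\<Sum>k<n. \<Sum>l<n. x k * A n k l * x l) - 4 * x i * m_loc A n x i"
proof -
  define e where "e k = (if k = i then - 2 * x i else 0)" for k
  have flip_eq: "spin_flip i x k = x k + e k" for k
    unfolding spin_flip_def e_def by auto
  have "(\<Sum>k<n. \<Sum>l<n. spin_flip i x k * A n k l * spin_flip i x l)
     = (\<Sum>k<n. \<Sum>l<n. x k * A n k l * x l) + (\<Sum>k<n. \<Sum>l<n. x k * A n k l * e l)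
       + (\<Sum>k<n. \<Sum>l<n. e k * A n k l * x l) + (\<Sum>k<n. \<Sum>l<n. e k * A n k l * e l)"
    unfolding flip_eq by (simp add: algebra_simps sum.distrib)
  also have "(\<Sum>k<n. \<Sum>l<n. x k * A n k l * e l) = (\<Sum>k<n. x k * A n k i * (- 2 * x i))"
    unfolding e_def using assms(2) by (simp add: if_distrib cong: if_cong)
  also have "\<dots> = - 2 * x i * m_loc A n x i"
    unfolding m_loc_def sum_distrib_left
    by (rule sum.cong) (use assms in \<open>auto simp: admissible_def\<close>)
  also have "(\<Sum>k<n. \<Sum>l<n. e k * A n k l * x l) = (\<Sum>k<n. e k * m_loc A n x k)"
    unfolding m_loc_def by (simp add: sum_distrib_left mult.assoc)
  also have "\<dots> = (\<Sum>k<n. if k = i then - 2 * x i * m_loc A n x i else 0)"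
    by (rule sum.cong) (auto simp: e_def)
  also have "\<dots> = - 2 * x i * m_loc A n x i"
    using assms(2) by simp
  also have "(\<Sum>k<n. \<Sum>l<n. e k * A n k l * e l) = 0"
    by (intro sum.neutral ballI) (use assms in \<open>auto simp: e_def admissible_def\<close>)
  finally show ?thesis by simp
qed

lemma ising_weight_spin_flip:
  assumes "admissible A" "i < n"
  shows "ising_weight A n \<beta> B (spin_flip i x)
       = ising_weight A n \<beta> B x * exp (- 2 * x i * (\<beta> * m_loc A n x i + B))"
proof -
  have "(\<Sum>k<n. spin_flip i x k) = (\<Sum>k<n. x k + (if k = i then - 2 * x i else 0))"
    unfolding spin_flip_def by (rule sum.cong) auto
  then have magnetization: "(\<Sum>k<n. spin_flip i x k) = (\<Sum>k<n. x k) - 2 * x i"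
    using assms(2) by (simp add: sum.distrib)
  show ?thesis
    unfolding ising_weight_def quadratic_form_spin_flip[OF assms] magnetization exp_add[symmetric]
    by (rule arg_cong[where f=exp]) (simp add: algebra_simps)
qed

lemma one_minus_tanh_real: "1 - tanh (a::real) = exp (- 2 * a) * (1 + tanh a)"
proof -
  have "1 + exp (- 2 * a) > 0" by (simp add: add_pos_pos)
  then show ?thesis unfolding tanh_real_altdef by (simp add: field_simps)
qed

text \<open>Conditionally on all other spins, \<open>x i\<close> has mean \<open>tanh (\<beta> m_i + B)\<close>; pairing each
  configuration with its flip at \<open>i\<close> turns this into an identity of finite sums.\<close>
lemma ising_expect_conditional_centering:
  assumes "admissible A" "i < n" and g: "\<And>x. x \<in> cfgs n \<Longrightarrow> g (spin_flip i x) = g x"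
  shows "ising_expect A n \<beta> B (\<lambda>x. g x * (x i - tanh (\<beta> * m_loc A n x i + B))) = 0"
proof -
  let ?f = "\<lambda>x. ising_weight A n \<beta> B x * (g x * (x i - tanh (\<beta> * m_loc A n x i + B)))"
  have pair: "?f x + ?f (spin_flip i x) = 0" if x: "x \<in> cfgs n" for x
  proof -
    define a where "a = \<beta> * m_loc A n x i + B"
    have xi: "x i = 1 \<or> x i = -1" using x assms(2) unfolding cfgs_def by auto
    have t1: "1 - tanh a = exp (- 2 * a) * (1 + tanh a)" by (rule one_minus_tanh_real)
    then have t2: "exp (2 * a) * (1 - tanh a) = 1 + tanh a"
      by (simp add: mult.assoc[symmetric] exp_add[symmetric])
    have "?f x + ?f (spin_flip i x) = ising_weight A n \<beta> B x * g x *
       ((x i - tanh a) + exp (- 2 * x i * a) * (- x i - tanh a))"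
      unfolding ising_weight_spin_flip[OF assms(1,2)] g[OF x] m_loc_spin_flip[OF assms(1,2)]
        a_def[symmetric]
      by (simp add: spin_flip_def algebra_simps)
    also have "(x i - tanh a) + exp (- 2 * x i * a) * (- x i - tanh a) = 0"
      using xi t1 t2 by (auto simp: algebra_simps)
    finally show ?thesis by simp
  qed
  have "2 * sum ?f (cfgs n) = sum ?f (cfgs n) + (\<Sum>x\<in>cfgs n. ?f (spin_flip i x))"
    using sum_cfgs_spin_flip[OF assms(2), of ?f] by simp
  also have "\<dots> = 0"
    unfolding sum.distrib[symmetric] by (rule sum.neutral) (use pair in auto)
  finally show ?thesis unfolding ising_expect_def by simp
qed

lemma abs_tanh_diff_le: "\<bar>tanh u - tanh v\<bar> \<le> \<bar>u - (v::real)\<bar>"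
proof -
  have ordered: "\<bar>tanh v - tanh u\<bar> \<le> v - u" if uv: "u < v" for u v :: real
  proof -
    have "DERIV tanh z :> 1 - tanh z ^ 2" for z :: real
      using has_field_derivative_tanh[where g="\<lambda>x. x" and x=z and Db=1 and s=UNIV,
          OF _ DERIV_ident] cosh_real_pos[of z]
      by simp
    then obtain z where "tanh v - tanh u = (v - u) * (1 - tanh z ^ 2)"
      using MVT2[OF uv, of tanh "\<lambda>z. 1 - tanh z ^ 2"] by blast
    moreover have "0 \<le> 1 - tanh z ^ 2" "1 - tanh z ^ 2 \<le> 1"
      using tanh_real_bounds[of z] by (auto simp: abs_square_le_1)
    ultimately show ?thesis using uv
      by (simp add: abs_mult mult_le_cancel_left1)
  qed
  consider "u < v" | "u = v" | "v < u" by linarith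
  then show ?thesis
    using ordered[of u v] ordered[of v u] by cases (simp_all add: abs_minus_commute)
qed

lemma abs_spin_minus_tanh_le: "\<bar>s\<bar> \<le> 1 \<Longrightarrow> \<bar>s - tanh (t::real)\<bar> \<le> 2"
  using tanh_real_bounds[of t] by auto

lemma abs_m_loc_le:
  assumes "admissible A" "\<forall>i<n. (\<Sum>j<n. A n i j) \<le> \<gamma>" "i < n" "\<And>k. k < n \<Longrightarrow> \<bar>y k\<bar> \<le> 1"
  shows "\<bar>m_loc A n y i\<bar> \<le> \<gamma>"
proof -
  have "\<bar>m_loc A n y i\<bar> \<le> (\<Sum>j<n. \<bar>A n i j * y j\<bar>)"
    unfolding m_loc_def by (rule sum_abs)
  also have "\<dots> \<le> (\<Sum>j<n. A n i j)"
  proof (rule sum_mono)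
    fix j assume "j \<in> {..<n}"
    then have "A n i j \<ge> 0" "\<bar>y j\<bar> \<le> 1" using assms unfolding admissible_def by auto
    then show "\<bar>A n i j * y j\<bar> \<le> A n i j" by (simp add: abs_mult mult_left_le)
  qed
  also have "\<dots> \<le> \<gamma>" using assms by auto
  finally show ?thesis .
qed

lemma m_loc_fun_upd_zero:
  assumes "i < n"
  shows "m_loc A n (x(i := 0)) j = m_loc A n x j - A n j i * x i"
proof -
  have "m_loc A n (x(i := 0)) j = (\<Sum>l<n. A n j l * x l - (if l = i then A n j i * x i else 0))"
    unfolding m_loc_def by (rule sum.cong) auto
  then show ?thesis using assms unfolding m_loc_def by (simp add: sum_subtractf)
qed

lemma abs_affine_times_residual_diff_le:
  fixes a b \<beta> B mx my s d \<gamma> :: real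
  assumes "\<bar>mx - my\<bar> \<le> d" "\<bar>my\<bar> \<le> \<gamma>" "\<bar>s\<bar> \<le> 1" "\<beta> \<ge> 0"
  shows "\<bar>(a*mx+b)*(s - tanh(\<beta>*mx+B)) - (a*my+b)*(s - tanh(\<beta>*my+B))\<bar>
          \<le> (2*\<bar>a\<bar> + (\<bar>a\<bar>*\<gamma>+\<bar>b\<bar>)*\<beta>) * d"
proof -
  have split: "(a*mx+b)*(s - tanh(\<beta>*mx+B)) - (a*my+b)*(s - tanh(\<beta>*my+B))
     = a*(mx-my)*(s - tanh(\<beta>*mx+B)) + (a*my+b)*(tanh(\<beta>*my+B) - tanh(\<beta>*mx+B))"
    by (simp add: algebra_simps)
  have "d \<ge> 0" using assms(1) by linarith
  then have first: "\<bar>a*(mx-my)*(s - tanh(\<beta>*mx+B))\<bar> \<le> \<bar>a\<bar> * d * 2"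
    unfolding abs_mult by (intro mult_mono abs_spin_minus_tanh_le assms mult_left_mono) auto
  have coef: "\<bar>a*my+b\<bar> \<le> \<bar>a\<bar>*\<gamma>+\<bar>b\<bar>"
    using abs_triangle_ineq[of "a*my" b] mult_left_mono[OF assms(2), of "\<bar>a\<bar>"]
    by (simp add: abs_mult)
  have "\<bar>tanh(\<beta>*my+B) - tanh(\<beta>*mx+B)\<bar> \<le> \<bar>\<beta> * (mx - my)\<bar>"
    using abs_tanh_diff_le[of "\<beta>*my+B" "\<beta>*mx+B"] by (simp add: algebra_simps abs_minus_commute)
  also have "\<dots> \<le> \<beta> * d" using assms(1,4) by (simp add: abs_mult mult_left_mono)
  finally have "\<bar>(a*my+b)*(tanh(\<beta>*my+B) - tanh(\<beta>*mx+B))\<bar> \<le> (\<bar>a\<bar>*\<gamma>+\<bar>b\<bar>) * (\<beta> * d)"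
    unfolding abs_mult by (intro mult_mono coef) (use order_trans[OF abs_ge_zero coef] in simp_all)
  then show ?thesis unfolding split using first abs_triangle_ineq[of "a*(mx-my)*(s - tanh(\<beta>*mx+B))"]
    by (simp add: algebra_simps)
qed

definition pl_summand :: "real \<Rightarrow> real \<Rightarrow> mat_seq \<Rightarrow> nat \<Rightarrow> real \<Rightarrow> real \<Rightarrow> nat \<Rightarrow> (nat \<Rightarrow> real) \<Rightarrow> real"
  where "pl_summand a b A n \<beta> B i x = (a * m_loc A n x i + b) * (x i - tanh (\<beta> * m_loc A n x i + B))"

lemma Q_pl_eq_sum_pl_summand: "Q_pl A n \<beta> B x = (\<Sum>i<n. pl_summand 1 0 A n \<beta> B i x)"
  unfolding Q_pl_def pl_summand_def by simp

lemma R_pl_eq_sum_pl_summand: "R_pl A n \<beta> B x = (\<Sum>i<n. pl_summand 0 1 A n \<beta> B i x)"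
  unfolding R_pl_def pl_summand_def by simp

context
  fixes A :: mat_seq and n :: nat and \<gamma> \<beta> B a b :: real
  assumes adm: "admissible A" and row_sum: "\<forall>i<n. (\<Sum>j<n. A n i j) \<le> \<gamma>"
    and \<gamma>_nonneg: "\<gamma> \<ge> 0" and \<beta>_nonneg: "\<beta> \<ge> 0"
begin

abbreviation (input) h where "h \<equiv> pl_summand a b A n \<beta> B"
abbreviation (input) K where "K \<equiv> \<bar>a\<bar> * \<gamma> + \<bar>b\<bar>"

lemma abs_affine_m_loc_le:
  assumes "i < n" "x \<in> cfgs n"
  shows "\<bar>a * m_loc A n x i + b\<bar> \<le> K"
proof -
  have "\<bar>m_loc A n x i\<bar> \<le> \<gamma>"
    using abs_m_loc_le[OF adm row_sum assms(1)] abs_le_1_if_cfgs[OF assms(2)] by blast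
  then show ?thesis
    using abs_triangle_ineq[of "a * m_loc A n x i" b] mult_left_mono[of _ \<gamma> "\<bar>a\<bar>"]
    by (force simp: abs_mult)
qed

lemma abs_pl_summand_le:
  assumes "i < n" "x \<in> cfgs n"
  shows "\<bar>h i x\<bar> \<le> 2 * K"
proof -
  have "\<bar>h i x\<bar> \<le> K * 2"
    unfolding pl_summand_def abs_mult
    by (intro mult_mono abs_affine_m_loc_le abs_spin_minus_tanh_le abs_le_1_if_cfgs[OF assms(2)] assms)
       (auto simp: \<gamma>_nonneg)
  then show ?thesis by simp
qed

lemma abs_pl_summand_remove_spin_le:
  assumes "i < n" "j < n" "x \<in> cfgs n"
  shows "\<bar>h j x - h j (x(i := 0))\<bar> \<le> (2*\<bar>a\<bar> + K*\<beta>) * A n j i + (if i = j then K else 0)"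
proof (cases "i = j")
  case True
  have "A n i i = 0" using adm assms unfolding admissible_def by auto
  then have "m_loc A n (x(i := 0)) i = m_loc A n x i"
    using m_loc_fun_upd_zero[OF assms(1)] by simp
  then have "h j x - h j (x(i := 0)) = (a * m_loc A n x i + b) * x i"
    unfolding pl_summand_def True by (simp add: algebra_simps)
  also have "\<bar>\<dots>\<bar> \<le> K * 1"
    unfolding abs_mult
    by (intro mult_mono abs_affine_m_loc_le abs_le_1_if_cfgs[OF assms(3)] assms) (auto simp: \<gamma>_nonneg)
  finally have "\<bar>h j x - h j (x(i := 0))\<bar> \<le> K" by simp
  then show ?thesis using True \<open>A n i i = 0\<close> by simp
next
  case False
  have "\<bar>m_loc A n x j - m_loc A n (x(i := 0)) j\<bar> = \<bar>A n j i * x i\<bar>"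
    unfolding m_loc_fun_upd_zero[OF assms(1)] by simp
  also have "\<dots> \<le> A n j i"
    using adm assms abs_le_1_if_cfgs[OF assms(3), of i] unfolding admissible_def
    by (simp add: abs_mult mult_left_le)
  finally have "\<bar>h j x - h j (x(i := 0))\<bar> \<le> (2*\<bar>a\<bar> + K*\<beta>) * A n j i"
    unfolding pl_summand_def fun_upd_other[OF False[symmetric]]
    by (rule abs_affine_times_residual_diff_le[OF _ abs_m_loc_le[OF adm row_sum assms(2)]
          abs_le_1_if_cfgs[OF assms(3)] \<beta>_nonneg])
       (use abs_le_1_if_cfgs[OF assms(3)] in auto)
  then show ?thesis using False by simp
qed


text \<open>Write \<open>h_j x = (h_j x - h_j (x with spin i removed)) + h_j (x with spin i removed)\<close>: the
  second part does not depend on \<open>x i\<close>, so its product with \<open>h_i\<close> is centred, and the first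
  part is controlled by the interaction \<open>A n j i\<close>.\<close>
lemma ising_expect_pl_summand_product_le:
  assumes "i < n" "j < n"
  shows "ising_expect A n \<beta> B (\<lambda>x. h i x * h j x)
    \<le> 2 * K * ((2*\<bar>a\<bar> + K*\<beta>) * A n j i + (if i = j then K else 0))"
proof -
  define g where "g x = (a * m_loc A n x i + b) * h j (x(i := 0))" for x
  have g_flip: "g (spin_flip i x) = g x" for x
    unfolding g_def m_loc_spin_flip[OF adm assms(1)] by (simp add: spin_flip_def)
  have split: "h i x * h j x = h i x * (h j x - h j (x(i := 0)))
     + g x * (x i - tanh (\<beta> * m_loc A n x i + B))" for x
    unfolding g_def pl_summand_def by (simp add: algebra_simps)
  have "ising_expect A n \<beta> B (\<lambda>x. h i x * h j x)
      = ising_expect A n \<beta> B (\<lambda>x. h i x * (h j x - h j (x(i := 0))))"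
    unfolding split ising_expect_add
      ising_expect_conditional_centering[OF adm assms(1), of g, OF g_flip] by simp
  also have "\<dots> \<le> ising_expect A n \<beta> B (\<lambda>x. \<bar>h i x * (h j x - h j (x(i := 0)))\<bar>)"
    using ising_expect_abs_le by (rule abs_le_D1)
  also have "\<dots> \<le> ising_expect A n \<beta> B
      (\<lambda>_. 2 * K * ((2*\<bar>a\<bar> + K*\<beta>) * A n j i + (if i = j then K else 0)))"
    unfolding abs_mult
    by (intro ising_expect_mono mult_mono abs_pl_summand_le abs_pl_summand_remove_spin_le assms)
       (auto simp: \<gamma>_nonneg)
  finally show ?thesis by simp
qed

lemma ising_expect_sum_pl_summand_square_le:
  "ising_expect A n \<beta> B (\<lambda>x. (\<Sum>i<n. h i x)\<^sup>2) \<le> 2 * K * ((2*\<bar>a\<bar> + K*\<beta>) * \<gamma> + K) * n"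
proof -
  have "ising_expect A n \<beta> B (\<lambda>x. (\<Sum>i<n. h i x)\<^sup>2)
      = (\<Sum>i<n. \<Sum>j<n. ising_expect A n \<beta> B (\<lambda>x. h i x * h j x))"
    unfolding power2_eq_square sum_product ising_expect_sum ..
  also have "\<dots> \<le> (\<Sum>i<n. \<Sum>j<n. 2 * K * ((2*\<bar>a\<bar> + K*\<beta>) * A n j i + (if i = j then K else 0)))"
    by (intro sum_mono ising_expect_pl_summand_product_le) auto
  also have "\<dots> = 2 * K * ((2*\<bar>a\<bar> + K*\<beta>) * (\<Sum>j<n. \<Sum>i<n. A n j i) + n * K)"
    by (simp add: sum.distrib sum_distrib_left[symmetric] sum.swap[of "\<lambda>i j. A n j i"])
  also have "\<dots> \<le> 2 * K * ((2*\<bar>a\<bar> + K*\<beta>) * (n * \<gamma>) + n * K)"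
  proof -
    have "(\<Sum>j<n. \<Sum>i<n. A n j i) \<le> (\<Sum>j<n. \<gamma>)" using row_sum by (intro sum_mono) auto
    then show ?thesis using \<gamma>_nonneg \<beta>_nonneg by (intro mult_left_mono add_right_mono) auto
  qed
  finally show ?thesis by (simp add: algebra_simps)
qed

end

lemma score_deviation_bound:
  assumes adm: "admissible A" and row_sum: "\<And>n. \<forall>i<n. (\<Sum>j<n. A n i j) \<le> \<gamma>"
    and "\<gamma> \<ge> 0" "\<beta> \<ge> 0"
  obtains C :: real where "C > 0"
    and "\<And>n t. t > 0 \<Longrightarrow> ising_prob A n \<beta> B (\<lambda>x. \<bar>Q_pl A n \<beta> B x\<bar> > t) \<le> C * n / t\<^sup>2"
    and "\<And>n t. t > 0 \<Longrightarrow> ising_prob A n \<beta> B (\<lambda>x. \<bar>R_pl A n \<beta> B x\<bar> > t) \<le> C * n / t\<^sup>2"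
proof
  define CQ where "CQ = 2 * \<gamma> * ((2 + \<gamma> * \<beta>) * \<gamma> + \<gamma>)"
  define CR where "CR = 2 * (\<beta> * \<gamma> + 1)"
  have "CQ \<ge> 0" "CR > 0" unfolding CQ_def CR_def using assms(3,4) by (simp_all add: add_nonneg_pos)
  then show "CQ + CR > 0" by simp
  fix n and t :: real assume t: "t > 0"
  have "ising_expect A n \<beta> B (\<lambda>x. (Q_pl A n \<beta> B x)\<^sup>2) \<le> CQ * n"
    unfolding Q_pl_eq_sum_pl_summand CQ_def
    using ising_expect_sum_pl_summand_square_le[OF adm row_sum assms(3,4), where a=1 and b=0 and B=B] by simp
  then show "ising_prob A n \<beta> B (\<lambda>x. \<bar>Q_pl A n \<beta> B x\<bar> > t) \<le> (CQ + CR) * n / t\<^sup>2"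
    using ising_prob_abs_gt_le[OF t, of A n \<beta> B "Q_pl A n \<beta> B"] \<open>CR > 0\<close> t
    by (smt (verit) divide_right_mono mult_right_mono of_nat_0_le_iff zero_le_power2)
  have "ising_expect A n \<beta> B (\<lambda>x. (R_pl A n \<beta> B x)\<^sup>2) \<le> CR * n"
    unfolding R_pl_eq_sum_pl_summand CR_def
    using ising_expect_sum_pl_summand_square_le[OF adm row_sum assms(3,4), where a=0 and b=1 and B=B] by simp
  then show "ising_prob A n \<beta> B (\<lambda>x. \<bar>R_pl A n \<beta> B x\<bar> > t) \<le> (CQ + CR) * n / t\<^sup>2"
    using ising_prob_abs_gt_le[OF t, of A n \<beta> B "R_pl A n \<beta> B"] \<open>CQ \<ge> 0\<close> t
    by (smt (verit) divide_right_mono mult_right_mono of_nat_0_le_iff zero_le_power2)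
qed

section \<open>Strong convexity of the negative log pseudo-likelihood\<close>

lemma one_minus_tanh_sq_ge_exp: "1 - tanh (y::real) ^ 2 \<ge> exp (- 2 * \<bar>y\<bar>)"
proof -
  have "cosh y > 0" by simp
  have "1 - tanh y ^ 2 = (cosh y ^ 2 - sinh y ^ 2) / cosh y ^ 2"
    unfolding tanh_def power_divide using \<open>cosh y > 0\<close> by (simp add: diff_divide_distrib)
  also have "\<dots> = 1 / cosh y ^ 2" using cosh_square_eq[of y] by simp
  finally have sech_sq: "1 - tanh y ^ 2 = 1 / cosh y ^ 2" .
  have "cosh y \<le> exp \<bar>y\<bar>"
    unfolding cosh_field_def by (cases "y \<ge> 0") auto
  then have "1 / exp \<bar>y\<bar> ^ 2 \<le> 1 / cosh y ^ 2"
    using \<open>cosh y > 0\<close> by (intro divide_left_mono power_mono) auto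
  moreover have "1 / exp \<bar>y\<bar> ^ 2 = exp (- 2 * \<bar>y\<bar>)"
    by (simp add: power2_eq_square exp_add[symmetric] exp_minus field_simps)
  ultimately show ?thesis unfolding sech_sq by simp
qed

lemma one_minus_tanh_sq_pos: "1 - tanh (y::real) ^ 2 > 0"
  using one_minus_tanh_sq_ge_exp[of y] exp_gt_zero[of "- 2 * \<bar>y\<bar>"] by linarith

definition neg_log_pl :: "mat_seq \<Rightarrow> nat \<Rightarrow> (nat \<Rightarrow> real) \<Rightarrow> real \<Rightarrow> real \<Rightarrow> real" where
  "neg_log_pl A n x \<beta> B = (\<Sum>i<n. ln (cosh (\<beta> * m_loc A n x i + B)) - x i * (\<beta> * m_loc A n x i + B))"

text \<open>Second derivative of \<open>neg_log_pl\<close> at \<open>(\<beta>, B)\<close> in direction \<open>(d1, d2)\<close>.\<close>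
definition pl_curvature :: "mat_seq \<Rightarrow> nat \<Rightarrow> (nat \<Rightarrow> real) \<Rightarrow> real \<Rightarrow> real \<Rightarrow> real \<Rightarrow> real \<Rightarrow> real" where
  "pl_curvature A n x \<beta> B d1 d2 =
     (\<Sum>i<n. (d1 * m_loc A n x i + d2)^2 * (1 - tanh (\<beta> * m_loc A n x i + B) ^ 2))"

lemma neg_log_pl_line_deriv:
  "((\<lambda>t. neg_log_pl A n x (b + t*d1) (c + t*d2)) has_real_derivative
     - (d1 * Q_pl A n (b + t*d1) (c + t*d2) x + d2 * R_pl A n (b + t*d1) (c + t*d2) x)) (at t)"
proof -
  have "cosh y \<noteq> 0" for y :: real using cosh_real_pos[of y] by linarith
  then show ?thesis
    unfolding neg_log_pl_def Q_pl_def R_pl_def sum_distrib_left sum_negf[symmetric]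
      sum.distrib[symmetric]
    by (intro DERIV_sum) (auto intro!: derivative_eq_intros simp: tanh_def field_simps)
qed

lemma score_line_deriv:
  "((\<lambda>t. d1 * Q_pl A n (b + t*d1) (c + t*d2) x + d2 * R_pl A n (b + t*d1) (c + t*d2) x)
     has_real_derivative - pl_curvature A n x (b + t*d1) (c + t*d2) d1 d2) (at t)"
proof -
  have "cosh y \<noteq> 0" for y :: real using cosh_real_pos[of y] by linarith
  then show ?thesis
    unfolding pl_curvature_def Q_pl_def R_pl_def sum_distrib_left sum_negf[symmetric]
      sum.distrib[symmetric]
    by (intro DERIV_sum) (auto intro!: derivative_eq_intros simp: power2_eq_square field_simps)
qed

lemma sum_affine_sq_eq_variance_decomp:
  fixes m :: "nat \<Rightarrow> real"
  assumes "n > 0"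
  defines "mb \<equiv> (\<Sum>i<n. m i) / n"
  shows "(\<Sum>i<n. (d1 * m i + d2)^2) = n * (d1^2 * ((\<Sum>i<n. (m i - mb)^2) / n) + (d1*mb + d2)^2)"
proof -
  have centred: "(\<Sum>i<n. m i - mb) = 0"
    using assms(1) unfolding mb_def by (simp add: sum_subtractf)
  have "(\<Sum>i<n. (d1 * m i + d2)^2) =
     (\<Sum>i<n. d1^2 * (m i - mb)^2 + 2*d1*(d1*mb+d2) * (m i - mb) + (d1*mb + d2)^2)"
    by (rule sum.cong) (auto simp: power2_eq_square algebra_simps)
  also have "\<dots> = d1^2 * (\<Sum>i<n. (m i - mb)^2) + 2*d1*(d1*mb+d2) * (\<Sum>i<n. m i - mb)
      + n * (d1*mb + d2)^2"
    by (simp add: sum.distrib sum_distrib_left)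
  finally show ?thesis using centred assms(1) by (simp add: field_simps)
qed

text \<open>The variance part \<open>d1\<^sup>2 T\<close> alone does not control \<open>d2\<close>; the mean part \<open>(d1 mb + d2)\<^sup>2\<close>
  does once \<open>d1\<close> is controlled and \<open>\<bar>mb\<bar> \<le> \<gamma>\<close>.\<close>
lemma quadratic_form_lower_bound:
  fixes d1 d2 mb T \<delta> \<gamma> :: real
  assumes "mb^2 \<le> \<gamma>^2" "0 < \<delta>" "\<delta> \<le> T"
  shows "\<delta> / (1 + 2*\<gamma>^2 + 2*\<delta>) * (d1^2 + d2^2) \<le> d1^2 * T + (d1 * mb + d2)^2"
proof -
  define cc where "cc = d1 * mb + d2"
  have pos: "1 + 2*\<gamma>^2 + 2*\<delta> > 0" using assms by (simp add: add_pos_nonneg)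
  have "d2^2 \<le> 2*cc^2 + 2*(d1^2 * mb^2)"
    unfolding cc_def using sum_squares_ge_zero[of "d2 + 2 * d1*mb" 0]
    by (simp add: power2_eq_square algebra_simps)
  also have "d1^2 * mb^2 \<le> d1^2 * \<gamma>^2" using assms(1) by (simp add: mult_left_mono)
  finally have d2_le: "d2^2 \<le> 2*cc^2 + 2*(d1^2*\<gamma>^2)" by simp
  have "(1 + 2*\<gamma>^2 + 2*\<delta>) * (d1^2 * \<delta> + cc^2) - \<delta> * (d1^2 + d2^2)
     = 2*\<delta>^2*d1^2 + cc^2*(1 + 2*\<gamma>^2) + \<delta> * ((2*cc^2 + 2*(d1^2*\<gamma>^2)) - d2^2)"
    by (simp add: algebra_simps power2_eq_square)
  also have "\<dots> \<ge> 0"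
    using assms(2) d2_le by (intro add_nonneg_nonneg mult_nonneg_nonneg) auto
  finally have "\<delta> / (1 + 2*\<gamma>^2 + 2*\<delta>) * (d1^2 + d2^2) \<le> d1^2 * \<delta> + cc^2"
    using pos by (simp add: field_simps)
  also have "\<dots> \<le> d1^2 * T + cc^2" using assms(3) by (simp add: mult_left_mono)
  finally show ?thesis unfolding cc_def .
qed

lemma sum_affine_m_loc_sq_lower_bound:
  assumes "admissible A" "\<forall>i<n. (\<Sum>j<n. A n i j) \<le> \<gamma>" "n > 0" "x \<in> cfgs n"
    "0 < \<delta>" "\<delta> \<le> T_stat A n x"
  shows "n * (\<delta> / (1 + 2*\<gamma>^2 + 2*\<delta>)) * (d1^2 + d2^2) \<le> (\<Sum>i<n. (d1 * m_loc A n x i + d2)^2)"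
proof -
  have "\<bar>m_loc A n x i\<bar> \<le> \<gamma>" if "i < n" for i
    using abs_m_loc_le[OF assms(1,2) that] abs_le_1_if_cfgs[OF assms(4)] by blast
  then have "(\<Sum>i<n. \<bar>m_loc A n x i\<bar>) \<le> (\<Sum>i<n. \<gamma>)"
    by (intro sum_mono) auto
  then have "\<bar>\<Sum>i<n. m_loc A n x i\<bar> \<le> n * \<gamma>"
    by (simp add: order_trans[OF sum_abs])
  then have "\<bar>m_bar A n x\<bar> \<le> \<gamma>"
    unfolding m_bar_def using assms(3) by (simp add: divide_le_eq abs_divide mult.commute)
  then have "(m_bar A n x)^2 \<le> \<gamma>^2"
    using power_mono[of "\<bar>m_bar A n x\<bar>" \<gamma> 2] by simp
  then have "n * (\<delta> / (1 + 2*\<gamma>^2 + 2*\<delta>)) * (d1^2 + d2^2)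
      \<le> n * (d1^2 * T_stat A n x + (d1 * m_bar A n x + d2)^2)"
    unfolding mult.assoc using assms(5,6) by (intro mult_left_mono quadratic_form_lower_bound) auto
  also have "\<dots> = (\<Sum>i<n. (d1 * m_loc A n x i + d2)^2)"
    unfolding T_stat_def m_bar_def by (rule sum_affine_sq_eq_variance_decomp[OF assms(3), symmetric])
  finally show ?thesis .
qed

lemma pl_curvature_pos:
  assumes "(\<Sum>i<n. (d1 * m_loc A n x i + d2)^2) > 0"
  shows "pl_curvature A n x \<beta> B d1 d2 > 0"
proof -
  obtain i where i: "i < n" "(d1 * m_loc A n x i + d2)^2 > 0"
    using assms by (metis (no_types, lifting) lessThan_iff less_eq_real_def sum_nonpos
        zero_le_power2 not_less)
  have "0 \<le> (d1 * m_loc A n x j + d2)^2 * (1 - tanh (\<beta> * m_loc A n x j + B) ^ 2)" for j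
    by (intro mult_nonneg_nonneg zero_le_power2 less_imp_le[OF one_minus_tanh_sq_pos])
  moreover have "0 < (d1 * m_loc A n x i + d2)^2 * (1 - tanh (\<beta> * m_loc A n x i + B) ^ 2)"
    using i(2) one_minus_tanh_sq_pos by (rule mult_pos_pos)
  ultimately show ?thesis
    unfolding pl_curvature_def using i(1) by (intro sum_pos2[of "{..<n}" i]) auto
qed

lemma abs_dot2_le: "\<bar>d1 * q + d2 * r\<bar> \<le> sqrt (d1^2 + d2^2) * sqrt (q^2 + (r::real)^2)"
proof -
  have "(d1^2 + d2^2) * (q^2 + r^2) - (d1 * q + d2 * r)^2 = (d1 * r - d2 * q)^2"
    by (simp add: power2_eq_square algebra_simps)
  then have "(d1 * q + d2 * r)^2 \<le> (d1^2 + d2^2) * (q^2 + r^2)"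
    by (metis diff_ge_0_iff_ge zero_le_power2)
  then show ?thesis
    by (metis real_sqrt_abs real_sqrt_le_mono real_sqrt_mult)
qed

lemma dist_real_pair: "dist p q = sqrt ((fst p - fst q)^2 + (snd p - snd (q :: real \<times> real))^2)"
  by (cases p, cases q) (simp add: dist_Pair_Pair dist_real_def)

lemma second_order_lower_bound:
  fixes g g' g'' :: "real \<Rightarrow> real"
  assumes g: "\<And>t. (g has_real_derivative g' t) (at t)"
    and g': "\<And>t. (g' has_real_derivative g'' t) (at t)"
    and g''_ge: "\<And>t. 0 \<le> t \<Longrightarrow> t \<le> 1 \<Longrightarrow> g'' t \<ge> c"
  shows "g 1 \<ge> g 0 + g' 0 + c / 2"
proof -
  have g'_ge: "g' t \<ge> g' 0 + c * t" if "0 < t" "t \<le> 1" for t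
  proof -
    obtain z where z: "0 < z" "z < t" "g' t - g' 0 = (t - 0) * g'' z"
      using MVT2[OF \<open>0 < t\<close>, of g' g''] g' by blast
    then have "c * t \<le> t * g'' z"
      using g''_ge[of z] that by (simp add: mult_left_mono mult.commute)
    then show ?thesis using z(3) by simp
  qed
  define K where "K t = g t - t * g' 0 - c * t^2 / 2" for t
  have "(K has_real_derivative g' t - g' 0 - c * t) (at t)" for t
    unfolding K_def by (auto intro!: derivative_eq_intros g simp: power2_eq_square)
  then obtain z where z: "0 < z" "z < 1" "K 1 - K 0 = (1 - 0) * (g' z - g' 0 - c * z)"
    using MVT2[of 0 1 K "\<lambda>t. g' t - g' 0 - c * t"] by auto
  then have "K 1 \<ge> K 0" using g'_ge[of z] by simp
  then show ?thesis unfolding K_def by simp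
qed

lemma pl_root_if_local_min:
  assumes "e > 0" and min: "\<And>y. dist y p < e \<Longrightarrow> neg_log_pl A n x (fst p) (snd p) \<le> neg_log_pl A n x (fst y) (snd y)"
  shows "Q_pl A n (fst p) (snd p) x = 0 \<and> R_pl A n (fst p) (snd p) x = 0"
proof -
  have crit: "d1 * Q_pl A n (fst p) (snd p) x + d2 * R_pl A n (fst p) (snd p) x = 0"
    if "\<bar>d1\<bar> + \<bar>d2\<bar> \<le> 1" for d1 d2
  proof -
    have "dist (fst p + t*d1, snd p + t*d2) p < e" if "\<bar>0 - t\<bar> < e" for t
    proof -
      have "dist (fst p + t*d1, snd p + t*d2) p \<le> \<bar>t*d1\<bar> + \<bar>t*d2\<bar>"
        using sqrt_sum_squares_le_sum_abs[of "t*d1" "t*d2"] by (simp add: dist_real_pair)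
      also have "\<dots> = \<bar>t\<bar> * (\<bar>d1\<bar> + \<bar>d2\<bar>)" by (simp add: abs_mult algebra_simps)
      also have "\<dots> \<le> \<bar>t\<bar>" using \<open>\<bar>d1\<bar> + \<bar>d2\<bar> \<le> 1\<close> by (simp add: mult_left_le)
      finally show ?thesis using that by simp
    qed
    then have "- (d1 * Q_pl A n (fst p + 0*d1) (snd p + 0*d2) x + d2 * R_pl A n (fst p + 0*d1) (snd p + 0*d2) x) = 0"
      by (intro DERIV_local_min[OF neg_log_pl_line_deriv \<open>e > 0\<close>]) (use min in fastforce)
    then show ?thesis by simp
  qed
  show ?thesis using crit[of 1 0] crit[of 0 1] by simp
qed

text \<open>Lower bound for \<open>1/n\<close> times the curvature of \<open>neg_log_pl\<close> on the box of radius 1 around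
  \<open>(\<beta>, B)\<close>, when the row sums are at most \<open>\<gamma>\<close> and \<open>T_stat \<ge> \<delta>\<close>.\<close>
definition pl_convexity_const :: "real \<Rightarrow> real \<Rightarrow> real \<Rightarrow> real \<Rightarrow> real" where
  "pl_convexity_const \<gamma> \<delta> \<beta> B =
     exp (- 2 * ((\<bar>\<beta>\<bar> + 1) * \<gamma> + \<bar>B\<bar> + 1)) * (\<delta> / (1 + 2*\<gamma>^2 + 2*\<delta>))"

lemma pl_convexity_const_pos: "\<gamma> \<ge> 0 \<Longrightarrow> \<delta> > 0 \<Longrightarrow> pl_convexity_const \<gamma> \<delta> \<beta> B > 0"
  unfolding pl_convexity_const_def by (simp add: add_pos_nonneg)

context
  fixes A :: mat_seq and n :: nat and \<gamma> \<delta> :: real and x :: "nat \<Rightarrow> real"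
  assumes adm: "admissible A" and row_sum: "\<forall>i<n. (\<Sum>j<n. A n i j) \<le> \<gamma>"
    and \<gamma>_nonneg: "\<gamma> \<ge> 0" and n_pos: "n > 0" and x: "x \<in> cfgs n"
    and \<delta>_pos: "0 < \<delta>" and T_ge: "\<delta> \<le> T_stat A n x"
begin

lemma pl_root_unique:
  assumes "Q_pl A n (fst p) (snd p) x = 0 \<and> R_pl A n (fst p) (snd p) x = 0"
    and "Q_pl A n (fst q) (snd q) x = 0 \<and> R_pl A n (fst q) (snd q) x = 0"
  shows "p = q"
proof (rule ccontr)
  assume "p \<noteq> q"
  define d1 where "d1 = fst q - fst p"
  define d2 where "d2 = snd q - snd p"
  have "d1^2 + d2^2 > 0"
    using \<open>p \<noteq> q\<close> unfolding d1_def d2_def by (auto simp: prod_eq_iff add_pos_nonneg add_nonneg_pos)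
  then have "(\<Sum>i<n. (d1 * m_loc A n x i + d2)^2) > 0"
    using sum_affine_m_loc_sq_lower_bound[OF adm row_sum n_pos x \<delta>_pos T_ge, of d1 d2]
      n_pos \<delta>_pos \<gamma>_nonneg
    by (smt (verit) divide_pos_pos mult_pos_pos of_nat_0_less_iff zero_le_power2)
  define score where "score t = d1 * Q_pl A n (fst p + t*d1) (snd p + t*d2) x
    + d2 * R_pl A n (fst p + t*d1) (snd p + t*d2) x" for t
  have "score 0 = 0" "score 1 = 0"
    using assms unfolding score_def d1_def d2_def by simp_all
  moreover obtain z where "score 1 - score 0
      = (1 - 0) * - pl_curvature A n x (fst p + z*d1) (snd p + z*d2) d1 d2"
    using MVT2[of 0 1 score] score_line_deriv unfolding score_def by fastforce
  ultimately have "pl_curvature A n x (fst p + z*d1) (snd p + z*d2) d1 d2 = 0" by simp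
  then show False
    using pl_curvature_pos[OF \<open>(\<Sum>i<n. (d1 * m_loc A n x i + d2)^2) > 0\<close>,
        of "fst p + z*d1" "snd p + z*d2"]
    by simp
qed


lemma pl_curvature_lower_bound:
  assumes "\<bar>\<beta> - \<beta>0\<bar> \<le> 1" "\<bar>B - B0\<bar> \<le> 1"
  shows "pl_convexity_const \<gamma> \<delta> \<beta>0 B0 * n * (d1^2 + d2^2) \<le> pl_curvature A n x \<beta> B d1 d2"
proof -
  define K1 where "K1 = (\<bar>\<beta>0\<bar> + 1) * \<gamma> + \<bar>B0\<bar> + 1"
  have sech_ge: "exp (- 2 * K1) \<le> 1 - tanh (\<beta> * m_loc A n x i + B) ^ 2" if "i < n" for i
  proof -
    have "\<bar>m_loc A n x i\<bar> \<le> \<gamma>"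
      using abs_m_loc_le[OF adm row_sum that] abs_le_1_if_cfgs[OF x] by blast
    moreover have "\<bar>\<beta>\<bar> \<le> \<bar>\<beta>0\<bar> + 1" "\<bar>B\<bar> \<le> \<bar>B0\<bar> + 1" using assms by linarith+
    ultimately have "\<bar>\<beta> * m_loc A n x i\<bar> \<le> (\<bar>\<beta>0\<bar> + 1) * \<gamma>"
      unfolding abs_mult by (intro mult_mono) auto
    then have "\<bar>\<beta> * m_loc A n x i + B\<bar> \<le> K1"
      using \<open>\<bar>B\<bar> \<le> \<bar>B0\<bar> + 1\<close> unfolding K1_def by linarith
    then show ?thesis
      using one_minus_tanh_sq_ge_exp[of "\<beta> * m_loc A n x i + B"] by (smt (verit) exp_le_cancel_iff)
  qed
  have "pl_convexity_const \<gamma> \<delta> \<beta>0 B0 * n * (d1^2 + d2^2)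
      = exp (- 2 * K1) * (n * (\<delta> / (1 + 2*\<gamma>^2 + 2*\<delta>)) * (d1^2 + d2^2))"
    unfolding pl_convexity_const_def K1_def by simp
  also have "\<dots> \<le> exp (- 2 * K1) * (\<Sum>i<n. (d1 * m_loc A n x i + d2)^2)"
    by (intro mult_left_mono sum_affine_m_loc_sq_lower_bound[OF adm row_sum n_pos x \<delta>_pos T_ge]) simp
  also have "\<dots> \<le> pl_curvature A n x \<beta> B d1 d2"
    unfolding pl_curvature_def sum_distrib_left
    using mult_left_mono[OF sech_ge, of _ "(d1 * m_loc A n x _ + d2)^2"]
    by (intro sum_mono) (simp add: mult.commute)
  finally show ?thesis .
qed

lemma neg_log_pl_gt_on_sphere:
  assumes r: "0 < r" "r \<le> 1" and p: "dist p (\<beta>0, B0) = r"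
    and small: "sqrt ((Q_pl A n \<beta>0 B0 x)^2 + (R_pl A n \<beta>0 B0 x)^2)
      < pl_convexity_const \<gamma> \<delta> \<beta>0 B0 * n * r / 2"
  shows "neg_log_pl A n x \<beta>0 B0 < neg_log_pl A n x (fst p) (snd p)"
proof -
  define d1 where "d1 = fst p - \<beta>0"
  define d2 where "d2 = snd p - B0"
  have norm_d: "sqrt (d1^2 + d2^2) = r" using p unfolding dist_real_pair d1_def d2_def by simp
  then have norm_sq: "d1^2 + d2^2 = r^2"
    by (metis add_nonneg_nonneg real_sqrt_pow2 zero_le_power2)
  have "\<bar>d1\<bar> \<le> 1" "\<bar>d2\<bar> \<le> 1"
    using real_sqrt_le_mono[of "d1^2" "d1^2 + d2^2"] real_sqrt_le_mono[of "d2^2" "d1^2 + d2^2"]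
      norm_d r
    by simp_all
  define c where "c = pl_convexity_const \<gamma> \<delta> \<beta>0 B0 * n * r^2"
  have "c \<le> pl_curvature A n x (\<beta>0 + t*d1) (B0 + t*d2) d1 d2" if "0 \<le> t" "t \<le> 1" for t
  proof -
    have "\<bar>t*d1\<bar> \<le> 1" "\<bar>t*d2\<bar> \<le> 1"
      using that \<open>\<bar>d1\<bar> \<le> 1\<close> \<open>\<bar>d2\<bar> \<le> 1\<close> by (simp_all add: abs_mult mult_le_one)
    then show ?thesis
      using pl_curvature_lower_bound[of "\<beta>0 + t*d1" \<beta>0 "B0 + t*d2" B0 d1 d2]
      unfolding c_def norm_sq by simp
  qed
  then have "neg_log_pl A n x (\<beta>0 + 1*d1) (B0 + 1*d2) \<ge> neg_log_pl A n x (\<beta>0 + 0*d1) (B0 + 0*d2)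
      + - (d1 * Q_pl A n (\<beta>0 + 0*d1) (B0 + 0*d2) x + d2 * R_pl A n (\<beta>0 + 0*d1) (B0 + 0*d2) x) + c / 2"
    using DERIV_minus[OF score_line_deriv]
    by (intro second_order_lower_bound[where g="\<lambda>t. neg_log_pl A n x (\<beta>0 + t*d1) (B0 + t*d2)"
          and g''="\<lambda>t. pl_curvature A n x (\<beta>0 + t*d1) (B0 + t*d2) d1 d2"] neg_log_pl_line_deriv)
       auto
  moreover have "\<bar>d1 * Q_pl A n \<beta>0 B0 x + d2 * R_pl A n \<beta>0 B0 x\<bar>
      \<le> r * sqrt ((Q_pl A n \<beta>0 B0 x)^2 + (R_pl A n \<beta>0 B0 x)^2)"
    using abs_dot2_le[of d1 "Q_pl A n \<beta>0 B0 x" d2 "R_pl A n \<beta>0 B0 x"] norm_d by simp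
  moreover have "r * sqrt ((Q_pl A n \<beta>0 B0 x)^2 + (R_pl A n \<beta>0 B0 x)^2)
      < r * (pl_convexity_const \<gamma> \<delta> \<beta>0 B0 * n * r / 2)"
    using small \<open>0 < r\<close> by (rule mult_strict_left_mono)
  moreover have "r * (pl_convexity_const \<gamma> \<delta> \<beta>0 B0 * n * r / 2) = c / 2"
    unfolding c_def by (simp add: power2_eq_square)
  ultimately show ?thesis unfolding d1_def d2_def by simp
qed



lemma pl_root_exists_near:
  assumes r: "0 < r" "r \<le> 1"
    and small: "sqrt ((Q_pl A n \<beta>0 B0 x)^2 + (R_pl A n \<beta>0 B0 x)^2)
      < pl_convexity_const \<gamma> \<delta> \<beta>0 B0 * n * r / 2"
  obtains p where "dist p (\<beta>0, B0) < r"
    and "Q_pl A n (fst p) (snd p) x = 0 \<and> R_pl A n (fst p) (snd p) x = 0"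
proof -
  let ?L = "\<lambda>p. neg_log_pl A n x (fst p) (snd p)"
  have "continuous_on (cball (\<beta>0, B0) r) ?L"
    using cosh_real_pos unfolding neg_log_pl_def
    by (auto intro!: continuous_intros simp: less_imp_neq[symmetric])
  moreover have "cball (\<beta>0, B0) r \<noteq> {}" using r by simp
  ultimately obtain p where p: "p \<in> cball (\<beta>0, B0) r"
    and min: "\<And>y. y \<in> cball (\<beta>0, B0) r \<Longrightarrow> ?L p \<le> ?L y"
    using continuous_attains_inf[OF compact_cball] by blast
  have "dist p (\<beta>0, B0) < r"
  proof (rule ccontr)
    assume "\<not> dist p (\<beta>0, B0) < r"
    then have "dist p (\<beta>0, B0) = r" using p by (simp add: dist_commute)
    then have "?L (\<beta>0, B0) < ?L p" using neg_log_pl_gt_on_sphere[OF r _ small] by simp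
    moreover have "?L p \<le> ?L (\<beta>0, B0)" using min[of "(\<beta>0, B0)"] r by simp
    ultimately show False by simp
  qed
  moreover have "Q_pl A n (fst p) (snd p) x = 0 \<and> R_pl A n (fst p) (snd p) x = 0"
  proof (rule pl_root_if_local_min)
    show "r - dist p (\<beta>0, B0) > 0" using \<open>dist p (\<beta>0, B0) < r\<close> by simp
    fix y assume "dist y p < r - dist p (\<beta>0, B0)"
    then have "y \<in> cball (\<beta>0, B0) r"
      using dist_triangle[of y "(\<beta>0, B0)" p] by (simp add: dist_commute)
    then show "?L p \<le> ?L y" by (rule min)
  qed
  ultimately show ?thesis by (rule that)
qed

lemma mple_near:
  assumes r: "0 < r" "r \<le> 1"
    and small: "sqrt ((Q_pl A n \<beta>0 B0 x)^2 + (R_pl A n \<beta>0 B0 x)^2)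
      < pl_convexity_const \<gamma> \<delta> \<beta>0 B0 * n * r / 2"
  shows "mple_exists A n x \<and> sqrt ((fst (mple A n x) - \<beta>0)\<^sup>2 + (snd (mple A n x) - B0)\<^sup>2) < r"
proof -
  obtain p where near: "dist p (\<beta>0, B0) < r"
    and root: "Q_pl A n (fst p) (snd p) x = 0 \<and> R_pl A n (fst p) (snd p) x = 0"
    using pl_root_exists_near[OF r small] .
  have unique: "q = p" if "Q_pl A n (fst q) (snd q) x = 0 \<and> R_pl A n (fst q) (snd q) x = 0" for q
    using that root by (rule pl_root_unique)
  have "mple_exists A n x" unfolding mple_exists_def using root unique by blast
  moreover have "mple A n x = p" unfolding mple_def using root unique by (rule the_equality)
  ultimately show ?thesis
    using near unfolding dist_real_pair by simp
qed

end

section \<open>Root-\<open>n\<close> consistency\<close>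

lemma T_stat_nonneg: "T_stat A n x \<ge> 0"
  unfolding T_stat_def by (intro divide_nonneg_nonneg sum_nonneg) auto

lemma mple_near_if_score_le:
  assumes adm: "admissible A" and row_sum: "\<forall>i<n. (\<Sum>j<n. A n i j) \<le> \<gamma>" and "\<gamma> \<ge> 0"
    and x: "x \<in> cfgs n" and "0 < \<delta>" "\<delta> \<le> T_stat A n x"
    and "s > 0" and n_large: "(6 * s / pl_convexity_const \<gamma> \<delta> \<beta>0 B0)^2 \<le> n" and "n > 0"
    and score_le: "\<bar>Q_pl A n \<beta>0 B0 x\<bar> \<le> s * sqrt n" "\<bar>R_pl A n \<beta>0 B0 x\<bar> \<le> s * sqrt n"
  shows "mple_exists A n x \<and> sqrt ((fst (mple A n x) - \<beta>0)\<^sup>2 + (snd (mple A n x) - B0)\<^sup>2)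
    \<le> (6 * s / pl_convexity_const \<gamma> \<delta> \<beta>0 B0) / sqrt n"
proof -
  define \<kappa> where "\<kappa> = pl_convexity_const \<gamma> \<delta> \<beta>0 B0"
  define r where "r = (6 * s / \<kappa>) / sqrt n"
  have "\<kappa> > 0" unfolding \<kappa>_def using assms by (simp add: pl_convexity_const_pos)
  then have "r > 0" unfolding r_def using assms by simp
  have "6 * s / \<kappa> \<le> sqrt n"
    using n_large \<open>\<kappa> > 0\<close> \<open>s > 0\<close> unfolding \<kappa>_def by (simp add: real_le_rsqrt)
  then have "r \<le> 1" unfolding r_def using \<open>n > 0\<close> by (subst divide_le_eq_1_pos) simp_all
  have "sqrt ((Q_pl A n \<beta>0 B0 x)^2 + (R_pl A n \<beta>0 B0 x)^2) \<le> 2 * s * sqrt n"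
    using sqrt_sum_squares_le_sum_abs[of "Q_pl A n \<beta>0 B0 x" "R_pl A n \<beta>0 B0 x"] score_le by simp
  also have "\<dots> < 3 * s * sqrt n" using assms by simp
  also have "3 * s * sqrt n = \<kappa> * n * r / 2"
  proof -
    have "\<kappa> * n * r / 2 = 3 * s * (n / sqrt n)"
      unfolding r_def using \<open>\<kappa> > 0\<close> by simp
    then show ?thesis using \<open>n > 0\<close> by (simp add: real_div_sqrt)
  qed
  finally have "mple_exists A n x \<and> sqrt ((fst (mple A n x) - \<beta>0)\<^sup>2 + (snd (mple A n x) - B0)\<^sup>2) < r"
    unfolding \<kappa>_def
    by (rule mple_near[OF adm row_sum assms(3) \<open>n > 0\<close> x assms(5,6) \<open>r > 0\<close> \<open>r \<le> 1\<close>])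
  then show ?thesis unfolding r_def \<kappa>_def by simp
qed


lemma mple_root_n_consistent:
  assumes adm: "admissible A" and row_sum: "\<And>n. \<forall>i<n. (\<Sum>j<n. A n i j) \<le> \<gamma>"
    and "\<gamma> \<ge> 0" "\<beta>0 \<ge> 0" and "\<epsilon> > 0"
    and T_bounded_below: "\<forall>\<epsilon>>0. \<exists>\<delta>>0. \<forall>\<^sub>F n in sequentially.
      ising_prob A n \<beta>0 B0 (\<lambda>x. \<bar>T_stat A n x\<bar> < \<delta>) \<le> \<epsilon>"
  shows "\<exists>M. \<forall>\<^sub>F n in sequentially.
    ising_prob A n \<beta>0 B0 (\<lambda>x. mple_exists A n x \<and>
      sqrt ((fst (mple A n x) - \<beta>0)\<^sup>2 + (snd (mple A n x) - B0)\<^sup>2) \<le> M / sqrt (real n))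
    \<ge> 1 - \<epsilon>"
proof -
  obtain C where "C > 0"
    and Q_dev: "\<And>n t. t > 0 \<Longrightarrow> ising_prob A n \<beta>0 B0 (\<lambda>x. \<bar>Q_pl A n \<beta>0 B0 x\<bar> > t) \<le> C * n / t\<^sup>2"
    and R_dev: "\<And>n t. t > 0 \<Longrightarrow> ising_prob A n \<beta>0 B0 (\<lambda>x. \<bar>R_pl A n \<beta>0 B0 x\<bar> > t) \<le> C * n / t\<^sup>2"
    using score_deviation_bound[OF adm row_sum assms(3,4)] by blast
  obtain \<delta> where "\<delta> > 0"
    and T_small: "\<forall>\<^sub>F n in sequentially. ising_prob A n \<beta>0 B0 (\<lambda>x. \<bar>T_stat A n x\<bar> < \<delta>) \<le> \<epsilon> / 2"
    using T_bounded_below \<open>\<epsilon> > 0\<close> by (meson half_gt_zero)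
  define s where "s = sqrt (4 * C / \<epsilon>)"
  have "s > 0" unfolding s_def using \<open>C > 0\<close> \<open>\<epsilon> > 0\<close> by simp
  define M where "M = 6 * s / pl_convexity_const \<gamma> \<delta> \<beta>0 B0"
  have "\<forall>\<^sub>F n in sequentially. M^2 \<le> real n \<and> n > 0"
    using eventually_ge_at_top[of "nat \<lceil>M^2\<rceil> + 1"]
    by (rule eventually_mono) linarith
  with T_small have "\<forall>\<^sub>F n in sequentially.
    ising_prob A n \<beta>0 B0 (\<lambda>x. mple_exists A n x \<and>
      sqrt ((fst (mple A n x) - \<beta>0)\<^sup>2 + (snd (mple A n x) - B0)\<^sup>2) \<le> M / sqrt (real n))
    \<ge> 1 - \<epsilon>"
  proof eventually_elim
    case (elim n)
    then have "n > 0" by simp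
    have dev: "C * n / (s * sqrt n)\<^sup>2 = \<epsilon> / 4"
      unfolding s_def using \<open>C > 0\<close> \<open>\<epsilon> > 0\<close> \<open>n > 0\<close> by (simp add: power_mult_distrib)
    have "ising_prob A n \<beta>0 B0 (\<lambda>x. mple_exists A n x \<and>
        sqrt ((fst (mple A n x) - \<beta>0)\<^sup>2 + (snd (mple A n x) - B0)\<^sup>2) \<le> M / sqrt (real n))
      \<ge> 1 - (ising_prob A n \<beta>0 B0 (\<lambda>x. \<bar>T_stat A n x\<bar> < \<delta>)
        + ising_prob A n \<beta>0 B0 (\<lambda>x. \<bar>Q_pl A n \<beta>0 B0 x\<bar> > s * sqrt n)
        + ising_prob A n \<beta>0 B0 (\<lambda>x. \<bar>R_pl A n \<beta>0 B0 x\<bar> > s * sqrt n))"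
      using mple_near_if_score_le[OF adm row_sum assms(3) _ \<open>\<delta> > 0\<close> _ \<open>s > 0\<close>] elim
        T_stat_nonneg \<open>n > 0\<close>
      unfolding M_def
      by (intro ising_prob_ge_1_minus_union) (simp add: not_less)
    moreover have "s * sqrt n > 0" using \<open>s > 0\<close> \<open>n > 0\<close> by simp
    ultimately show ?case
      using elim Q_dev[of "s * sqrt n" n] R_dev[of "s * sqrt n" n] unfolding dev by linarith
  qed
  then show ?thesis by blast
qed


lemma LIMSEQ_1_if_eventually_ge:
  fixes f :: "nat \<Rightarrow> real"
  assumes "\<And>\<epsilon>. \<epsilon> > 0 \<Longrightarrow> \<forall>\<^sub>F n in sequentially. f n \<ge> 1 - \<epsilon>" and "\<And>n. f n \<le> 1"
  shows "f \<longlonglongrightarrow> 1"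
proof (rule order_tendstoI)
  fix a :: real assume "a < 1"
  then have "\<forall>\<^sub>F n in sequentially. f n \<ge> 1 - (1 - a) / 2" by (intro assms(1)) simp
  then show "\<forall>\<^sub>F n in sequentially. a < f n"
    by (rule eventually_mono) (use \<open>a < 1\<close> in \<open>simp add: field_simps\<close>)
next
  fix a :: real assume "1 < a"
  then show "\<forall>\<^sub>F n in sequentially. f n < a"
    using assms(2) by (auto intro: always_eventually le_less_trans)
qed

theorem corollary1:
  fixes A :: mat_seq and \<beta>0 B0 :: real
  assumes "admissible A" and "cond_C1 A" and "cond_C2 A"
    and "\<beta>0 > 0" and "B0 \<noteq> 0"
    and "Theta_p_one (\<lambda>n. ising_prob A n \<beta>0 B0) (\<lambda>n x. T_stat A n x)"
  shows "((\<lambda>n. ising_prob A n \<beta>0 B0 (mple_exists A n)) \<longlonglongrightarrow> 1) \<and>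
         (\<forall>\<epsilon>>0. \<exists>M. \<forall>\<^sub>F n in sequentially.
           ising_prob A n \<beta>0 B0 (\<lambda>x. mple_exists A n x \<and>
              sqrt ((fst (mple A n x) - \<beta>0)\<^sup>2 + (snd (mple A n x) - B0)\<^sup>2) \<le> M / sqrt (real n))
           \<ge> 1 - \<epsilon>)"
proof -
  \<comment> \<open>(C2) and \<open>B0 \<noteq> 0\<close> serve in the paper to establish \<open>T_n = \<Theta>_p(1)\<close>.\<close>
  obtain \<gamma>0 where "\<And>n i. i < n \<Longrightarrow> (\<Sum>j<n. A n i j) \<le> \<gamma>0"
    using \<open>cond_C1 A\<close> unfolding cond_C1_def by blast
  then have row_sum: "\<forall>i<n. (\<Sum>j<n. A n i j) \<le> max \<gamma>0 0" for n
    by (meson max.coboundedI1)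
  have root_n: "\<exists>M. \<forall>\<^sub>F n in sequentially.
           ising_prob A n \<beta>0 B0 (\<lambda>x. mple_exists A n x \<and>
              sqrt ((fst (mple A n x) - \<beta>0)\<^sup>2 + (snd (mple A n x) - B0)\<^sup>2) \<le> M / sqrt (real n))
           \<ge> 1 - \<epsilon>" if "\<epsilon> > 0" for \<epsilon>
    using assms(1,4,6) that unfolding Theta_p_one_def
    by (intro mple_root_n_consistent[OF _ row_sum]) auto
  have "(\<lambda>n. ising_prob A n \<beta>0 B0 (mple_exists A n)) \<longlonglongrightarrow> 1"
  proof (rule LIMSEQ_1_if_eventually_ge[OF _ ising_prob_le_1])
    fix \<epsilon> :: real assume "\<epsilon> > 0"
    then obtain M where "\<forall>\<^sub>F n in sequentially.
        ising_prob A n \<beta>0 B0 (\<lambda>x. mple_exists A n x \<and>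
          sqrt ((fst (mple A n x) - \<beta>0)\<^sup>2 + (snd (mple A n x) - B0)\<^sup>2) \<le> M / sqrt (real n))
        \<ge> 1 - \<epsilon>" using root_n by blast
    then show "\<forall>\<^sub>F n in sequentially. ising_prob A n \<beta>0 B0 (mple_exists A n) \<ge> 1 - \<epsilon>"
      by (rule eventually_mono) (auto elim: order_trans intro: ising_prob_mono)
  qed
  with root_n show ?thesis by blast
qed

end
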